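(* The irreducible $\lambda$-quiddities over the ring $(\mathbb{Z}/2\mathbb{Z})\times(\mathbb{Z}/2\mathbb{Z})$ are exactly, up to cyclic permutation, the following tuples (entries written as pairs of residues mod 2): - $((1,1),(1,1),(1,1))$; - $((0,0),(0,0),(0,0),(0,0))$, $((0,0),(0,1),(0,0),(0,1))$, $((0,0),(1,0),(0,0),(1,0))$, $((1,0),(0,1),(1,0),(0,1))$; - $((1,0),(1,0),(1,0),(1,0),(1,0),(1,0))$, $((0,1),(0,1),(0,1),(0,1),(0,1),(0,1))$.
   Context: All rings are commutative with unit. For $a_1,\ldots,a_n\in A$, $M_n(a_1,\ldots,a_n)=\begin{pmatrix}a_n&-1\\1&0\end{pmatrix}\cdots\begin{pmatrix}a_1&-1\\1&0\end{pmatrix}$. An $n$-tuple $(a_1,\ldots,a_n)\in A^n$ is a $\lambda$-quiddity over $A$ if $M_n(a_1,\ldots,a_n)=\pm\mathrm{Id}$. For $(a_1,\ldots,a_n)\in A^n$, $(b_1,\ldots,b_m)\in A^m$, define $(a_1,\ldots,a_n)\oplus(b_1,\ldots,b_m)=(a_1+b_m,a_2,\ldots,a_{n-1},a_n+b_1,b_2,\ldots,b_{m-1})$. Write $(a_1,\ldots,a_n)\sim(b_1,\ldots,b_n)$ if $(b_1,\ldots,b_n)$ is obtained from $(a_1,\ldots,a_n)$ or from $(a_n,\ldots,a_1)$ by a cyclic permutation. A $\lambda$-quiddity $(c_1,\ldots,c_n)$ with $n\ge3$ is reducible if there exist a $\lambda$-quiddity $(b_1,\ldots,b_l)$ and a tuple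 $(a_1,\ldots,a_m)$ with $l,m\ge3$ and $(c_1,\ldots,c_n)\sim(a_1,\ldots,a_m)\oplus(b_1,\ldots,b_l)$; it is irreducible otherwise (by convention $(0,0)$ is reducible). *)

theory Defs
  imports Main "HOL-Library.Product_Plus" "HOL-Library.Numeral_Type"
begin

instantiation prod :: (times, times) times
begin
definition times_prod_def: "x * y = (fst x * fst y, snd x * snd y)"
instance ..
end

instantiation prod :: (one, one) one
begin
definition one_prod_def: "1 = (1, 1)"
instance ..
end

instance prod :: (comm_ring_1, comm_ring_1) comm_ring_1
  by standard (auto simp: times_prod_def one_prod_def zero_prod_def plus_prod_def
      algebra_simps prod_eq_iff)

section \<open>2x2 matrices, written as (a, b, c, d) for ((a, b), (c, d))\<close>

type_synonym 'a mat2 = "'a \<times> 'a \<times> 'a \<times> 'a"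

fun mat2_mult :: "'a::comm_ring_1 mat2 \<Rightarrow> 'a mat2 \<Rightarrow> 'a mat2" where
  "mat2_mult (a, b, c, d) (e, f, g, h) = (a*e + b*g, a*f + b*h, c*e + d*g, c*f + d*h)"

definition mat2_id :: "'a::comm_ring_1 mat2" where
  "mat2_id = (1, 0, 0, 1)"

definition mat2_neg_id :: "'a::comm_ring_1 mat2" where
  "mat2_neg_id = (-1, 0, 0, -1)"

definition elem_mat :: "'a::comm_ring_1 \<Rightarrow> 'a mat2" where
  "elem_mat a = (a, -1, 1, 0)"

definition Mn :: "'a::comm_ring_1 list \<Rightarrow> 'a mat2" where
  "Mn xs = foldl (\<lambda>m a. mat2_mult (elem_mat a) m) mat2_id xs"

definition lambda_quiddity :: "'a::comm_ring_1 list \<Rightarrow> bool" where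
  "lambda_quiddity xs \<longleftrightarrow> Mn xs = mat2_id \<or> Mn xs = mat2_neg_id"

text \<open>(a_1..a_n) \<oplus> (b_1..b_m) = (a_1+b_m, a_2..a_{n-1}, a_n+b_1, b_2..b_{m-1}); used for n, m \<ge> 2\<close>
definition qsum :: "'a::comm_ring_1 list \<Rightarrow> 'a list \<Rightarrow> 'a list" where
  "qsum as bs =
     [hd as + last bs] @ take (length as - 2) (tl as) @ [last as + hd bs]
     @ take (length bs - 2) (tl bs)"

definition dihedral_equiv :: "'a list \<Rightarrow> 'a list \<Rightarrow> bool" where
  "dihedral_equiv cs ds \<longleftrightarrow> (\<exists>k. ds = rotate k cs \<or> ds = rotate k (rev cs))"

definition reducible :: "'a::comm_ring_1 list \<Rightarrow> bool" where
  "reducible cs \<longleftrightarrow>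
     (\<exists>as bs. lambda_quiddity bs \<and> length bs \<ge> 3 \<and> length as \<ge> 3
        \<and> dihedral_equiv cs (qsum as bs))"

text \<open>Irreducible: a lambda-quiddity of length n \<ge> 3 that is not reducible
 (length 1 has no quiddities, length 2 only (0,0), which is reducible by convention).\<close>
definition irreducible_quiddity :: "'a::comm_ring_1 list \<Rightarrow> bool" where
  "irreducible_quiddity cs \<longleftrightarrow> lambda_quiddity cs \<and> length cs \<ge> 3 \<and> \<not> reducible cs"

end

theory Submission
  imports Defs
begin

text \<open>If the interior \<open>b\<^sub>2, \<dots>, b\<^sub>m\<^sub>-\<^sub>1\<close> of a \<open>\<lambda>\<close>-quiddity of length \<open>m \<ge> 3\<close> occurs
  as a cyclic segment of \<open>c\<close> leaving at least three further entries, then \<open>c\<close> splits off that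
  quiddity and is reducible; conversely a reducible \<open>c\<close> contains the interior of a shorter quiddity.
  Over \<open>(\<int>/2)\<^sup>2\<close> the only quiddity of length 3 is \<open>((1,1),(1,1),(1,1))\<close>, with interior \<open>(1,1)\<close>,
  and any two entries \<open>p, q \<noteq> (1,1)\<close> form the interior of a quiddity of length 4 unless
  \<open>p = q \<in> {(1,0),(0,1)}\<close>. So an irreducible quiddity of length at least 5 is constant with value
  \<open>(1,0)\<close> or \<open>(0,1)\<close>; these constant tuples are quiddities exactly for lengths divisible by 6, and
  a longer one contains the interior of the one of length 6, so its length is 6.
  Lengths 3 and 4 are settled by enumeration.\<close>

lemma Mn_append_id: "Mn xs = mat2_id \<Longrightarrow> Mn (xs @ ys) = Mn ys"
  by (simp add: Mn_def)

lemma butlast_tl_conv_take: "butlast (tl xs) = take (length xs - 2) (tl xs)"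
  by (simp add: butlast_conv_take numeral_2_eq_2)

lemma reducible_if_inner_segment:
  fixes bs :: "'a::comm_ring_1 list"
  assumes bs: "lambda_quiddity bs" "3 \<le> length bs"
    and cs: "cs = xs @ butlast (tl bs) @ ys"
    and rest: "3 \<le> length xs + length ys"
  shows "reducible cs"
proof -
  define d where "d = ys @ xs"
  have "3 \<le> length d" using rest by (simp add: d_def)
  then obtain y r where "d = y # r" and "r \<noteq> []"
    by (cases d) force+
  then obtain w z where d: "d = y # w @ [z]"
    by (metis rev_exhaust)
  \<comment> \<open>the end entries of \<open>as\<close> cancel the end entries of \<open>bs\<close> that \<open>qsum\<close> adds to them\<close>
  define as where "as = (y - last bs) # w @ [z - hd bs]"
  have "length as = length d"
    using d by (simp add: as_def)
  with \<open>3 \<le> length d\<close> have as: "3 \<le> length as"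
    by simp
  have "qsum as bs = d @ butlast (tl bs)"
    using bs(2) d by (simp add: qsum_def as_def butlast_tl_conv_take)
  also have "\<dots> = rotate (length (xs @ butlast (tl bs))) cs"
    using cs rotate_append[of "xs @ butlast (tl bs)" ys] by (simp add: d_def)
  finally have "dihedral_equiv cs (qsum as bs)"
    unfolding dihedral_equiv_def by metis
  with bs as show ?thesis
    unfolding reducible_def by blast
qed

lemma reducible_inner_subsetE:
  fixes cs :: "'a::comm_ring_1 list"
  assumes "reducible cs"
  obtains bs where "lambda_quiddity bs" "3 \<le> length bs" "length bs < length cs"
    "set (butlast (tl bs)) \<subseteq> set cs"
proof -
  from assms obtain as bs where bs: "lambda_quiddity bs" "3 \<le> length bs"
    and as: "3 \<le> length as" and equiv: "dihedral_equiv cs (qsum as bs)"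
    unfolding reducible_def by blast
  from equiv have "set (qsum as bs) = set cs" "length (qsum as bs) = length cs"
    unfolding dihedral_equiv_def by auto
  moreover have "length (qsum as bs) = length as + length bs - 2"
    using as bs(2) by (simp add: qsum_def)
  moreover have "set (butlast (tl bs)) \<subseteq> set (qsum as bs)"
    by (auto simp: qsum_def butlast_tl_conv_take)
  ultimately show ?thesis
    using that bs as by simp
qed

lemma rotate_period2_cases:
  assumes "rotate 2 xs = xs"
  shows "rotate k xs = xs \<or> rotate k xs = rotate1 xs"
proof (induction k)
  case (Suc k)
  then show ?case
    using assms by (auto simp: numeral_2_eq_2)
qed simp

lemma ex_rotate_period2_iff:
  assumes "\<forall>t\<in>T. rotate 2 t = t"
  shows "(\<exists>k. \<exists>t\<in>T. cs = rotate k t) \<longleftrightarrow> (\<exists>t\<in>T. cs = t \<or> cs = rotate1 t)"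
proof
  assume "\<exists>k. \<exists>t\<in>T. cs = rotate k t"
  then show "\<exists>t\<in>T. cs = t \<or> cs = rotate1 t"
    using assms rotate_period2_cases by metis
next
  assume "\<exists>t\<in>T. cs = t \<or> cs = rotate1 t"
  then show "\<exists>k. \<exists>t\<in>T. cs = rotate k t"
    by (metis One_nat_def rotate0 rotate_Suc id_apply)
qed

lemma Z2_cases: obtains "(x::2) = 0" | "x = 1"
proof (cases x)
  case (of_int z)
  then have "z < 2" by simp
  with of_int have "z = 0 \<or> z = 1" by arith
  then show ?thesis using of_int that by auto
qed

lemma Z2x2_cases:
  fixes x :: "2 \<times> 2"
  obtains "x = (0,0)" | "x = (0,1)" | "x = (1,0)" | "x = (1,1)"
proof -
  obtain a b where "x = (a, b)" by fastforce
  then show ?thesis using that by (cases a rule: Z2_cases; cases b rule: Z2_cases) auto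
qed

lemma ex_2x2: "(\<exists>x::2 \<times> 2. P x) \<longleftrightarrow> P (0,0) \<or> P (0,1) \<or> P (1,0) \<or> P (1,1)"
  by (metis Z2x2_cases)

lemmas quiddity_simps = lambda_quiddity_def Mn_def elem_mat_def mat2_id_def mat2_neg_id_def
  times_prod_def one_prod_def zero_prod_def

lemma lambda_quiddity3_2x2:
  "lambda_quiddity [a, b, c :: 2 \<times> 2] \<longleftrightarrow> a = (1,1) \<and> b = (1,1) \<and> c = (1,1)"
  by (cases a rule: Z2x2_cases; cases b rule: Z2x2_cases; cases c rule: Z2x2_cases)
    (simp_all add: quiddity_simps)

lemma lambda_quiddity4_through_pair:
  fixes p q :: "2 \<times> 2"
  assumes "p \<noteq> (1,1)" "q \<noteq> (1,1)" "\<not> (q = p \<and> (p = (1,0) \<or> p = (0,1)))"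
  shows "\<exists>x y. lambda_quiddity [x, p, q, y]"
  using assms unfolding ex_2x2
  by (cases p rule: Z2x2_cases; cases q rule: Z2x2_cases) (simp_all add: quiddity_simps)

lemma not_lambda_quiddity_constant_inner:
  fixes a x y :: "2 \<times> 2"
  assumes "a = (1,0) \<or> a = (0,1)" and "1 \<le> k" "k \<le> 3"
  shows "\<not> lambda_quiddity (x # replicate k a @ [y])"
proof -
  have "k = 1 \<or> k = 2 \<or> k = 3" using assms(2,3) by arith
  then show ?thesis using assms(1)
    by (cases x rule: Z2x2_cases; cases y rule: Z2x2_cases)
      (auto simp: quiddity_simps numeral_eq_Suc)
qed

text \<open>In characteristic 2 we have \<open>-Id = Id\<close>; the matrices \<open>E(1)\<close> and \<open>E(0)\<close> over \<open>\<int>/2\<close> have orders 3 and 2.\<close>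

lemma Mn_replicate6:
  assumes "a = (1,0) \<or> a = (0,1)"
  shows "Mn (replicate 6 (a :: 2 \<times> 2)) = mat2_id"
  using assms by (auto simp: quiddity_simps numeral_eq_Suc)

lemma lambda_quiddity_replicate_iff:
  assumes a: "a = (1,0) \<or> a = (0,1)"
  shows "lambda_quiddity (replicate n (a :: 2 \<times> 2)) \<longleftrightarrow> 6 dvd n"
proof (induction n rule: less_induct)
  case (less n)
  show ?case
  proof (cases "n < 6")
    case True
    then have "6 dvd n \<longleftrightarrow> n = 0" by auto
    moreover have "n = 0 \<or> n = 1 \<or> n = 2 \<or> n = 3 \<or> n = 4 \<or> n = 5" using True by arith
    then have "lambda_quiddity (replicate n a) \<longleftrightarrow> n = 0"
      using a by (auto simp: quiddity_simps numeral_eq_Suc)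
    ultimately show ?thesis by simp
  next
    case False
    then obtain m where n: "n = 6 + m" by (metis le_add_diff_inverse not_less)
    have "Mn (replicate n a) = Mn (replicate m a)"
      unfolding n replicate_add using Mn_append_id Mn_replicate6[OF a] by blast
    then have "lambda_quiddity (replicate n a) \<longleftrightarrow> lambda_quiddity (replicate m a)"
      by (simp add: lambda_quiddity_def)
    also have "\<dots> \<longleftrightarrow> 6 dvd n" using less[of m] n by simp
    finally show ?thesis .
  qed
qed

lemma reducible_length4_contains_11:
  fixes cs :: "(2 \<times> 2) list"
  assumes "reducible cs" and "length cs = 4"
  shows "(1,1) \<in> set cs"
proof -
  obtain bs where bs: "lambda_quiddity bs" "3 \<le> length bs" "length bs < length cs"
    and inner: "set (butlast (tl bs)) \<subseteq> set cs"
    using reducible_inner_subsetE[OF assms(1)] .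
  with assms(2) obtain a b c where "bs = [a, b, c]"
    by (auto simp: length_Suc_conv numeral_eq_Suc le_Suc_eq less_Suc_eq)
  with bs(1) inner show ?thesis
    by (simp add: lambda_quiddity3_2x2)
qed

lemma not_reducible_replicate6:
  assumes a: "a = (1,0) \<or> a = (0,1)"
  shows "\<not> reducible (replicate 6 (a :: 2 \<times> 2))"
proof
  assume "reducible (replicate 6 a)"
  then obtain bs where bs: "lambda_quiddity bs" "3 \<le> length bs" "length bs < 6"
    and inner: "set (butlast (tl bs)) \<subseteq> {a}"
    by (rule reducible_inner_subsetE) auto
  define k where "k = length (butlast (tl bs))"
  have "tl bs \<noteq> []"
    using bs(2) by (cases bs) auto
  then have "bs = hd bs # butlast (tl bs) @ [last bs]"
    by (metis append_butlast_last_id last_tl list.collapse list.sel(2))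
  also have "butlast (tl bs) = replicate k a"
    unfolding k_def using inner by (intro replicate_length_same[symmetric]) auto
  finally have "lambda_quiddity (hd bs # replicate k a @ [last bs])"
    using bs(1) by simp
  moreover have "1 \<le> k" "k \<le> 3"
    using bs(2,3) by (auto simp: k_def)
  ultimately show False
    using not_lambda_quiddity_constant_inner[OF a] by blast
qed

lemma irreducible_quiddity_not_11:
  fixes cs :: "(2 \<times> 2) list"
  assumes irr: "irreducible_quiddity cs" and len: "4 \<le> length cs"
  shows "(1,1) \<notin> set cs"
proof
  assume "(1,1) \<in> set cs"
  then obtain xs ys where "cs = xs @ butlast (tl [(1,1), (1,1), (1,1)]) @ ys"
    by (auto dest: split_list)
  moreover have "lambda_quiddity [(1,1), (1,1), (1::2, 1::2)]"
    by (simp add: lambda_quiddity3_2x2)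
  ultimately have "reducible cs"
    using len by (auto intro: reducible_if_inner_segment)
  with irr show False
    by (simp add: irreducible_quiddity_def)
qed

lemma irreducible_quiddity_adjacent:
  fixes cs :: "(2 \<times> 2) list"
  assumes irr: "irreducible_quiddity cs" and len: "5 \<le> length cs" and i: "Suc i < length cs"
  shows "cs ! Suc i = cs ! i \<and> (cs ! i = (1,0) \<or> cs ! i = (0,1))"
proof (rule ccontr)
  assume "\<not> ?thesis"
  moreover have "(1,1) \<notin> set cs"
    using irreducible_quiddity_not_11[OF irr] len by simp
  then have "cs ! i \<noteq> (1,1)" "cs ! Suc i \<noteq> (1,1)"
    using i nth_mem by (metis Suc_lessD)+
  ultimately obtain x y where q: "lambda_quiddity [x, cs ! i, cs ! Suc i, y]"
    using lambda_quiddity4_through_pair by blast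
  have "cs = take i cs @ butlast (tl [x, cs ! i, cs ! Suc i, y]) @ drop (Suc (Suc i)) cs"
    using i by (simp add: Cons_nth_drop_Suc id_take_nth_drop[symmetric])
  then have "reducible cs"
    using q len i by (intro reducible_if_inner_segment[OF q]) auto
  with irr show False
    by (simp add: irreducible_quiddity_def)
qed

lemma irreducible_quiddity_longE:
  fixes cs :: "(2 \<times> 2) list"
  assumes irr: "irreducible_quiddity cs" and len: "5 \<le> length cs"
  obtains a where "a = (1,0) \<or> a = (0,1)" and "cs = replicate 6 a"
proof -
  define a where "a = cs ! 0"
  define n where "n = length cs"
  have const: "cs ! i = a" if "i < n" for i
    using that
  proof (induction i)
    case (Suc i)
    then show ?case using irreducible_quiddity_adjacent[OF irr len] by (simp add: n_def)
  qed (simp add: a_def)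
  have a: "a = (1,0) \<or> a = (0,1)"
    using irreducible_quiddity_adjacent[OF irr len, of 0] len by (simp add: a_def)
  have cs: "cs = replicate n a"
    by (simp add: list_eq_iff_nth_eq const n_def)
  with irr have "6 dvd n"
    using lambda_quiddity_replicate_iff[OF a] by (simp add: irreducible_quiddity_def)
  moreover have "n < 12"
  proof (rule ccontr)
    assume long: "\<not> n < 12"
    have "butlast (tl (replicate 6 a)) = replicate 4 a"
      by (simp add: butlast_conv_take)
    moreover have "cs = replicate 1 a @ replicate 4 a @ replicate (n - 5) a"
      unfolding replicate_add[symmetric] using long cs by simp
    ultimately have split: "cs = replicate 1 a @ butlast (tl (replicate 6 a)) @ replicate (n - 5) a"
      by simp
    have "lambda_quiddity (replicate 6 a)"
      using lambda_quiddity_replicate_iff[OF a] by simp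
    then have "reducible cs"
      by (rule reducible_if_inner_segment[OF _ _ split]) (use long in simp_all)
    with irr show False
      by (simp add: irreducible_quiddity_def)
  qed
  ultimately have "n = 6"
    using len by (auto simp: n_def)
  with cs a that show ?thesis
    by simp
qed

definition irreducible_quiddities_2x2 :: "(2 \<times> 2) list set" where
  "irreducible_quiddities_2x2 =
    {[(1,1), (1,1), (1,1)],
     [(0,0), (0,0), (0,0), (0,0)],
     [(0,0), (0,1), (0,0), (0,1)], [(0,1), (0,0), (0,1), (0,0)],
     [(0,0), (1,0), (0,0), (1,0)], [(1,0), (0,0), (1,0), (0,0)],
     [(1,0), (0,1), (1,0), (0,1)], [(0,1), (1,0), (0,1), (1,0)],
     replicate 6 (1,0), replicate 6 (0,1)}"

lemma irreducible_quiddity_imp_mem: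
  fixes cs :: "(2 \<times> 2) list"
  assumes irr: "irreducible_quiddity cs"
  shows "cs \<in> irreducible_quiddities_2x2"
proof -
  from irr have q: "lambda_quiddity cs" and len: "3 \<le> length cs"
    by (simp_all add: irreducible_quiddity_def)
  consider "length cs = 3" | "length cs = 4" | "5 \<le> length cs"
    using len by linarith
  then show ?thesis
  proof cases
    case 1
    then obtain a b c where "cs = [a, b, c]"
      by (auto simp: length_Suc_conv numeral_eq_Suc)
    with q show ?thesis
      by (simp add: lambda_quiddity3_2x2 irreducible_quiddities_2x2_def)
  next
    case 2
    then obtain a b c d where cs: "cs = [a, b, c, d]"
      by (auto simp: length_Suc_conv numeral_eq_Suc)
    have "(1,1) \<notin> set cs"
      using irreducible_quiddity_not_11[OF irr] 2 by simp
    with q show ?thesis unfolding cs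
      by (cases a rule: Z2x2_cases; cases b rule: Z2x2_cases; cases c rule: Z2x2_cases;
          cases d rule: Z2x2_cases) (simp_all add: quiddity_simps irreducible_quiddities_2x2_def)
  next
    case 3
    with irr show ?thesis
      by (elim irreducible_quiddity_longE) (auto simp: irreducible_quiddities_2x2_def)
  qed
qed

lemma mem_imp_irreducible_quiddity:
  assumes "cs \<in> irreducible_quiddities_2x2"
  shows "irreducible_quiddity cs"
proof -
  from assms consider "cs = [(1,1), (1,1), (1,1)]"
    | "lambda_quiddity cs" "length cs = 4" "(1,1) \<notin> set cs"
    | a where "a = (1,0) \<or> a = (0,1)" "cs = replicate 6 a"
    unfolding irreducible_quiddities_2x2_def by (auto simp: quiddity_simps)
  then show ?thesis
  proof cases
    case 1
    then show ?thesis
      by (auto simp: irreducible_quiddity_def lambda_quiddity3_2x2 elim: reducible_inner_subsetE)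
  next
    case 2
    then show ?thesis
      using reducible_length4_contains_11 by (auto simp: irreducible_quiddity_def)
  next
    case 3
    then show ?thesis
      using lambda_quiddity_replicate_iff not_reducible_replicate6
      by (auto simp: irreducible_quiddity_def)
  qed
qed

theorem theorem2p6:
  fixes cs :: "(2 \<times> 2) list"
  shows "irreducible_quiddity cs \<longleftrightarrow>
    (\<exists>k. \<exists>t \<in> {[(1,1),(1,1),(1,1)],
                 [(0,0),(0,0),(0,0),(0,0)],
                 [(0,0),(0,1),(0,0),(0,1)],
                 [(0,0),(1,0),(0,0),(1,0)],
                 [(1,0),(0,1),(1,0),(0,1)],
                 [(1,0),(1,0),(1,0),(1,0),(1,0),(1,0)],
                 [(0,1),(0,1),(0,1),(0,1),(0,1),(0,1)]}.
       cs = rotate k t)"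
proof -
  have "irreducible_quiddity cs \<longleftrightarrow> cs \<in> irreducible_quiddities_2x2"
    using irreducible_quiddity_imp_mem mem_imp_irreducible_quiddity by blast
  then show ?thesis
    by (subst ex_rotate_period2_iff) (simp_all add: irreducible_quiddities_2x2_def numeral_eq_Suc)
qed

end
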